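(* Let $\psi(x)=(1-|x|^2)_+^2$ on $\mathbb{R}^2$. Suppose that $w:\mathbb{R}^2\to[0,\infty)$ is locally in $L^1\cap L^\infty$, that $\int_{B(1)}w(x)\,dx\le m$ for some $m>0$, and let $\varrho,\delta\in(0,1)$. (i) There exists $H_0\in(0,1)$ such that $\int_{B(\varrho)}w(x)\,dx\le(1-\delta)m$ implies $\int_{\mathbb{R}^2}\psi(x)w(x)\,dx\le(1-H_0)m$. (ii) There exists $H_1\in(0,1)$ such that if $\int_{B(1)}w(x)\,dx\le m$ and $\int_{\mathbb{R}^2}\psi(x)w(x)\,dx\ge(1-H_1)m$, then $\int_{B(\varrho)}w(x)\,dx\ge\left(1-\frac{\delta}{2}\right)m$. (iii) If $\int_{\mathbb{R}^2}\psi(x)w(x)\,dx\le(1-H)m$ for some $H\in(0,1)$, then $\int_{B(\beta)}w(x)\,dx\le\left(1-\frac{H}{2}\right)m$ for every $\beta>0$ with $\beta^2\le\frac{H}{4}$.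
   Context: $B(r)$ denotes the open ball of radius $r$ centered at the origin of $\mathbb{R}^2$; $(s)_+=\max\{s,0\}$. *)

theory Defs
  imports "HOL-Analysis.Analysis"
begin

definition psi :: "real^2 \<Rightarrow> real" where
  "psi x = (max (1 - (norm x)\<^sup>2) 0)\<^sup>2"

definition locally_L1_Linf :: "(real^2 \<Rightarrow> real) \<Rightarrow> bool" where
  "locally_L1_Linf w \<longleftrightarrow>
     (\<forall>K. compact K \<longrightarrow> set_integrable lborel K w \<and>
        (\<exists>C. AE x in lborel. x \<in> K \<longrightarrow> \<bar>w x\<bar> \<le> C))"

end

theory Submission
  imports Defs
begin

text \<open>Since \<open>\<psi> \<le> 1\<close>, \<open>\<psi> \<le> (1 - \<rho>\<^sup>2)\<^sup>2\<close> outside \<open>B(\<rho>)\<close> and \<open>\<psi> = 0\<close> outside \<open>B(1)\<close>,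
  with \<open>g = 1 - (1 - \<rho>\<^sup>2)\<^sup>2\<close> the weight is dominated by \<open>g \<chi>\<^bsub>B(\<rho>)\<^esub> + (1 - g) \<chi>\<^bsub>B(1)\<^esub>\<close>.
  Hence \<open>\<integral>\<psi>w \<le> g \<integral>\<^bsub>B(\<rho>)\<^esub> w + (1 - g) m\<close>: every unit of mass missing from \<open>B(\<rho>)\<close>
  lowers \<open>\<integral>\<psi>w\<close> by the fixed fraction \<open>g\<close>. This gives (i) with \<open>H\<^sub>0 = g\<delta>\<close> and, applied
  to \<open>\<delta>/2\<close>, (ii) with \<open>H\<^sub>1 = g\<delta>/4\<close>. Part (iii) comes from the lower bound
  \<open>\<psi>(x) \<ge> 1 - 2|x|\<^sup>2\<close>, i.e. \<open>\<psi> \<ge> (1 - H/2) \<chi>\<^bsub>B(\<beta>)\<^esub>\<close> when \<open>\<beta>\<^sup>2 \<le> H/4\<close>, together with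
  \<open>1 - H \<le> (1 - H/2)\<^sup>2\<close>.\<close>

lemma psi_nonneg: "0 \<le> psi x"
  unfolding psi_def by simp

lemma psi_le_one: "psi x \<le> 1"
  unfolding psi_def by (auto intro!: power_le_one)

lemma psi_eq_0_if_norm_ge_1: "1 \<le> norm x \<Longrightarrow> psi x = 0"
  unfolding psi_def by (simp add: one_le_power)

lemma psi_le_outside_ball:
  assumes "0 \<le> r" "r \<le> norm x"
  shows "psi x \<le> (1 - r\<^sup>2)\<^sup>2"
proof (cases "norm x < 1")
  case True
  have "r\<^sup>2 \<le> (norm x)\<^sup>2" "(norm x)\<^sup>2 < 1"
    using assms True by (simp_all add: power_mono abs_square_less_1)
  then show ?thesis unfolding psi_def by (simp add: power_mono)
qed (simp add: psi_eq_0_if_norm_ge_1)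

lemma psi_ge: "1 - 2 * (norm x)\<^sup>2 \<le> psi x"
proof (cases "norm x < 1")
  case True
  then have "psi x = (1 - (norm x)\<^sup>2)\<^sup>2"
    unfolding psi_def by (simp add: abs_square_less_1)
  then show ?thesis by (simp add: power2_eq_square algebra_simps)
next
  case False
  then have "1 \<le> (norm x)\<^sup>2" by (simp add: one_le_power)
  then show ?thesis using psi_nonneg[of x] by linarith
qed

lemma continuous_on_psi: "continuous_on UNIV psi"
  unfolding psi_def by (intro continuous_intros)

lemma set_integrable_ball_if_locally_L1_Linf:
  assumes "locally_L1_Linf w"
  shows "set_integrable lborel (ball (0::real^2) r) w"
proof (rule set_integrable_subset)
  show "set_integrable lborel (cball (0::real^2) r) w"
    using assms unfolding locally_L1_Linf_def by simp
qed auto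

lemma integrable_psi_mult_if_locally_L1_Linf:
  assumes "locally_L1_Linf w"
  shows "integrable lborel (\<lambda>x. psi x * w x)"
proof -
  have I: "integrable lborel (\<lambda>x. indicator (cball (0::real^2) 1) x * w x)"
    using assms unfolding locally_L1_Linf_def set_integrable_def by simp
  have "psi \<in> borel_measurable lborel"
    using continuous_on_psi by (simp add: borel_measurable_continuous_onI)
  then have "integrable lborel (\<lambda>x. psi x * (indicator (cball 0 1) x * w x))"
    using I psi_nonneg psi_le_one
    by (intro Bochner_Integration.integrable_bound[OF I])
       (auto simp: abs_mult mult_left_le_one_le borel_measurable_integrable)
  moreover have "psi x * (indicator (cball 0 1) x * w x) = psi x * w x" for x
    by (cases "norm x \<le> 1") (auto simp: indicator_def psi_eq_0_if_norm_ge_1)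
  ultimately show ?thesis by simp
qed

definition psi_gap :: "real \<Rightarrow> real" where
  "psi_gap r = 1 - (1 - r\<^sup>2)\<^sup>2"

lemma psi_gap_bounds:
  assumes "0 < r" "r < 1"
  shows "0 < psi_gap r" "psi_gap r < 1"
proof -
  have "0 < 1 - r\<^sup>2" "1 - r\<^sup>2 < 1"
    using assms by (simp_all add: abs_square_less_1)
  then have "0 < (1 - r\<^sup>2)\<^sup>2" "(1 - r\<^sup>2)\<^sup>2 < 1"
    by (simp_all add: power_less_one_iff)
  then show "0 < psi_gap r" "psi_gap r < 1"
    unfolding psi_gap_def by simp_all
qed

lemma psi_le_indicator_combination:
  assumes "0 \<le> r" "r \<le> 1"
  shows "psi x \<le> psi_gap r * indicator (ball 0 r) x + (1 - psi_gap r) * indicator (ball 0 1) x"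
proof -
  consider "norm x < r" | "r \<le> norm x" "norm x < 1" | "1 \<le> norm x" by linarith
  then show ?thesis
  proof cases
    case 1
    then show ?thesis using assms psi_le_one[of x] by (simp add: indicator_def psi_gap_def)
  next
    case 2
    then show ?thesis using assms psi_le_outside_ball[of r x] by (simp add: indicator_def psi_gap_def)
  next
    case 3
    then show ?thesis using assms by (simp add: indicator_def psi_gap_def psi_eq_0_if_norm_ge_1)
  qed
qed

lemma psi_ge_indicator_ball: "(1 - 2 * \<beta>\<^sup>2) * indicator (ball 0 \<beta>) x \<le> psi x"
proof (cases "norm x < \<beta>")
  case True
  then have "(norm x)\<^sup>2 \<le> \<beta>\<^sup>2" by (simp add: power_mono)
  then show ?thesis using True psi_ge[of x] by (simp add: indicator_def)
qed (simp add: indicator_def psi_nonneg)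

lemma psi_weighted_integral_le:
  fixes w :: "real^2 \<Rightarrow> real"
  assumes "\<forall>x. 0 \<le> w x" "locally_L1_Linf w" "0 \<le> r" "r \<le> 1"
  shows "(LINT x|lborel. psi x * w x) \<le>
    psi_gap r * (LINT x:ball 0 r|lborel. w x) + (1 - psi_gap r) * (LINT x:ball 0 1|lborel. w x)"
proof -
  have Ir: "integrable lborel (\<lambda>x. indicator (ball (0::real^2) r) x * w x)"
    and I1: "integrable lborel (\<lambda>x. indicator (ball (0::real^2) 1) x * w x)"
    using set_integrable_ball_if_locally_L1_Linf[OF assms(2)] by (simp_all add: set_integrable_def)
  have "(LINT x|lborel. psi x * w x) \<le> (LINT x|lborel.
      (psi_gap r * indicator (ball 0 r) x + (1 - psi_gap r) * indicator (ball 0 1) x) * w x)"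
    using Ir I1 assms psi_le_indicator_combination[OF assms(3,4)]
    by (intro integral_mono integrable_psi_mult_if_locally_L1_Linf mult_right_mono)
       (simp_all add: distrib_right mult.assoc)
  also have "\<dots> = psi_gap r * (LINT x:ball 0 r|lborel. w x) + (1 - psi_gap r) * (LINT x:ball 0 1|lborel. w x)"
    using Ir I1 by (simp add: distrib_right mult.assoc set_lebesgue_integral_def)
  finally show ?thesis .
qed

lemma psi_weighted_integral_ge:
  fixes w :: "real^2 \<Rightarrow> real"
  assumes "\<forall>x. 0 \<le> w x" "locally_L1_Linf w"
  shows "(1 - 2 * \<beta>\<^sup>2) * (LINT x:ball 0 \<beta>|lborel. w x) \<le> (LINT x|lborel. psi x * w x)"
proof -
  have I: "integrable lborel (\<lambda>x. indicator (ball (0::real^2) \<beta>) x * w x)"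
    using set_integrable_ball_if_locally_L1_Linf[OF assms(2)] by (simp add: set_integrable_def)
  have "(1 - 2 * \<beta>\<^sup>2) * (LINT x:ball 0 \<beta>|lborel. w x)
      = (LINT x|lborel. ((1 - 2 * \<beta>\<^sup>2) * indicator (ball 0 \<beta>) x) * w x)"
    using I by (simp add: mult.assoc set_lebesgue_integral_def)
  also have "\<dots> \<le> (LINT x|lborel. psi x * w x)"
    using I assms psi_ge_indicator_ball
    by (intro integral_mono integrable_psi_mult_if_locally_L1_Linf mult_right_mono)
       (simp_all add: mult.assoc)
  finally show ?thesis .
qed

lemma psi_integral_le_if_ball_mass_le:
  fixes w :: "real^2 \<Rightarrow> real"
  assumes "\<forall>x. 0 \<le> w x" "locally_L1_Linf w" "0 < r" "r < 1"
    and "(LINT x:ball 0 1|lborel. w x) \<le> m"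
    and "(LINT x:ball 0 r|lborel. w x) \<le> (1 - \<delta>) * m"
  shows "(LINT x|lborel. psi x * w x) \<le> (1 - psi_gap r * \<delta>) * m"
proof -
  have "(LINT x|lborel. psi x * w x) \<le>
      psi_gap r * (LINT x:ball 0 r|lborel. w x) + (1 - psi_gap r) * (LINT x:ball 0 1|lborel. w x)"
    using psi_weighted_integral_le[of w r] assms(1-4) by simp
  also have "\<dots> \<le> psi_gap r * ((1 - \<delta>) * m) + (1 - psi_gap r) * m"
    using assms psi_gap_bounds[OF assms(3,4)] by (intro add_mono mult_left_mono) simp_all
  also have "\<dots> = (1 - psi_gap r * \<delta>) * m"
    by (simp add: algebra_simps)
  finally show ?thesis .
qed

lemma ball_mass_ge_if_psi_integral_ge:
  fixes w :: "real^2 \<Rightarrow> real"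
  assumes "\<forall>x. 0 \<le> w x" "locally_L1_Linf w" "0 < r" "r < 1" "0 < \<delta>" "0 < m"
    and "(LINT x:ball 0 1|lborel. w x) \<le> m"
    and "(1 - psi_gap r * \<delta> / 4) * m \<le> (LINT x|lborel. psi x * w x)"
  shows "(1 - \<delta> / 2) * m \<le> (LINT x:ball 0 r|lborel. w x)"
proof (rule ccontr)
  assume "\<not> ?thesis"
  then have "(LINT x|lborel. psi x * w x) \<le> (1 - psi_gap r * (\<delta> / 2)) * m"
    using assms by (intro psi_integral_le_if_ball_mass_le) simp_all
  moreover have "(1 - psi_gap r * (\<delta> / 2)) * m < (1 - psi_gap r * \<delta> / 4) * m"
    using assms psi_gap_bounds[OF assms(3,4)] by (intro mult_strict_right_mono) simp_all
  ultimately show False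
    using assms(8) by linarith
qed

lemma ball_mass_le_if_psi_integral_le:
  fixes w :: "real^2 \<Rightarrow> real"
  assumes "\<forall>x. 0 \<le> w x" "locally_L1_Linf w" "0 < m" "H < 2"
    and "(LINT x|lborel. psi x * w x) \<le> (1 - H) * m"
    and "\<beta>\<^sup>2 \<le> H / 4"
  shows "(LINT x:ball 0 \<beta>|lborel. w x) \<le> (1 - H / 2) * m"
proof -
  have "0 \<le> (LINT x:ball 0 \<beta>|lborel. w x)"
    using assms(1) unfolding set_lebesgue_integral_def by simp
  then have "(1 - H / 2) * (LINT x:ball 0 \<beta>|lborel. w x) \<le> (1 - 2 * \<beta>\<^sup>2) * (LINT x:ball 0 \<beta>|lborel. w x)"
    using assms(6) by (intro mult_right_mono) simp_all
  also have "\<dots> \<le> (LINT x|lborel. psi x * w x)"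
    using psi_weighted_integral_ge assms(1,2) .
  also have "\<dots> \<le> (1 - H) * m"
    by fact
  also have "\<dots> \<le> (1 - H / 2) * ((1 - H / 2) * m)"
  proof -
    have "(1 - H / 2) * (1 - H / 2) = (1 - H) + (H / 2)\<^sup>2"
      by (simp add: power2_eq_square algebra_simps)
    then have "1 - H \<le> (1 - H / 2) * (1 - H / 2)"
      by simp
    then show ?thesis
      using assms(3) by (simp add: mult_right_mono mult.assoc[symmetric])
  qed
  finally show ?thesis
    using assms(4) by simp
qed

theorem lemma2p1:
  fixes rho delta :: real
  assumes "0 < rho" "rho < 1" "0 < delta" "delta < 1"
  shows
   "(\<exists>H0. 0 < H0 \<and> H0 < 1 \<and>
      (\<forall>(w :: real^2 \<Rightarrow> real) (m :: real).
         (\<forall>x. 0 \<le> w x) \<and> locally_L1_Linf w \<and> 0 < m \<and>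
         (LINT x:ball 0 1|lborel. w x) \<le> m \<and>
         (LINT x:ball 0 rho|lborel. w x) \<le> (1 - delta) * m
         \<longrightarrow> (LINT x|lborel. psi x * w x) \<le> (1 - H0) * m))
    \<and>
    (\<exists>H1. 0 < H1 \<and> H1 < 1 \<and>
      (\<forall>(w :: real^2 \<Rightarrow> real) (m :: real).
         (\<forall>x. 0 \<le> w x) \<and> locally_L1_Linf w \<and> 0 < m \<and>
         (LINT x:ball 0 1|lborel. w x) \<le> m \<and>
         (LINT x|lborel. psi x * w x) \<ge> (1 - H1) * m
         \<longrightarrow> (LINT x:ball 0 rho|lborel. w x) \<ge> (1 - delta / 2) * m))
    \<and>
    (\<forall>(w :: real^2 \<Rightarrow> real) (m :: real) (H :: real) (beta :: real).
         (\<forall>x. 0 \<le> w x) \<and> locally_L1_Linf w \<and> 0 < m \<and>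
         (LINT x:ball 0 1|lborel. w x) \<le> m \<and>
         0 < H \<and> H < 1 \<and>
         (LINT x|lborel. psi x * w x) \<le> (1 - H) * m \<and>
         0 < beta \<and> beta\<^sup>2 \<le> H / 4
         \<longrightarrow> (LINT x:ball 0 beta|lborel. w x) \<le> (1 - H / 2) * m)"
proof -
  have gap: "0 < psi_gap rho" "psi_gap rho < 1"
    using psi_gap_bounds assms(1,2) by simp_all
  then have "psi_gap rho * delta < 1"
    using assms(3,4) mult_strict_mono[of "psi_gap rho" 1 delta 1] by simp
  moreover have "0 < psi_gap rho * delta"
    using gap assms(3) by simp
  ultimately show ?thesis
    using assms
    by (intro conjI exI[of _ "psi_gap rho * delta"] exI[of _ "psi_gap rho * delta / 4"] allI impI)
       (auto intro: psi_integral_le_if_ball_mass_le ball_mass_ge_if_psi_integral_ge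
             ball_mass_le_if_psi_integral_le)
qed

end
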